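(* Let $(S,\circ)$ be a right loop and let $T$ be an invariant right subloop of $S$ with $|T|=2$ such that the quotient right loop $S/T$ is a group. Then the group torsion $G_S$ of $S$ is an elementary abelian $2$-group.
   Context: A right loop is a set $S$ with a binary operation $\circ$ having a two-sided identity $1$ such that for all $a,b\in S$ the equation $X\circ a=b$ has a unique solution $X\in S$. A right subloop is a nonempty subset that is a right loop under the induced operation. A congruence on $S$ is an equivalence relation on $S$ which is a right subloop of $S\times S$ (componentwise operation). An invariant right subloop $T$ of $S$ is the equivalence class of $1$ of some congruence $R$ on $S$; the quotient $S/T=\{T\circ x\mid x\in S\}$ (the set of $R$-classes, where $T\circ x=\{t\circ x: t\in T\}$) is a right loop with operation $(T\circ x)\circ(T\circ y)=T\circ(x\circ y)$. For $y,z\in S$, $f^S(y,z):S\to S$ is the bijection with $f^S(y,z)(x)$ the unique solution $X$ of $X\circ(y\circ z)=(x\circ y)\circ z$; the group torsion $G_S$ is the subgroup of $\mathrm{Sym}(S)$ generated by all $f^S(y,z)$, $y,z\in S$. *)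

theory Defs
  imports "HOL-Algebra.Algebra"
begin

definition right_loop :: "'a set \<Rightarrow> ('a \<Rightarrow> 'a \<Rightarrow> 'a) \<Rightarrow> 'a \<Rightarrow> bool" where
  "right_loop S mul e \<longleftrightarrow>
     e \<in> S \<and> (\<forall>a\<in>S. \<forall>b\<in>S. mul a b \<in> S) \<and>
     (\<forall>a\<in>S. mul e a = a \<and> mul a e = a) \<and>
     (\<forall>a\<in>S. \<forall>b\<in>S. \<exists>!x. x \<in> S \<and> mul x a = b)"

definition right_subloop :: "'a set \<Rightarrow> 'a set \<Rightarrow> ('a \<Rightarrow> 'a \<Rightarrow> 'a) \<Rightarrow> bool" where
  "right_subloop T S mul \<longleftrightarrow> T \<noteq> {} \<and> T \<subseteq> S \<and> (\<exists>e'. right_loop T mul e')"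

definition pair_op :: "('a \<Rightarrow> 'a \<Rightarrow> 'a) \<Rightarrow> 'a \<times> 'a \<Rightarrow> 'a \<times> 'a \<Rightarrow> 'a \<times> 'a" where
  "pair_op mul p q = (mul (fst p) (fst q), mul (snd p) (snd q))"

definition congruence_rl :: "'a set \<Rightarrow> ('a \<Rightarrow> 'a \<Rightarrow> 'a) \<Rightarrow> ('a \<times> 'a) set \<Rightarrow> bool" where
  "congruence_rl S mul R \<longleftrightarrow> equiv S R \<and> right_subloop R (S \<times> S) (pair_op mul)"

definition invariant_subloop :: "'a set \<Rightarrow> ('a \<Rightarrow> 'a \<Rightarrow> 'a) \<Rightarrow> 'a \<Rightarrow> 'a set \<Rightarrow> bool" where
  "invariant_subloop S mul e T \<longleftrightarrow> (\<exists>R. congruence_rl S mul R \<and> T = R `` {e})"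

definition rcoset_rl :: "('a \<Rightarrow> 'a \<Rightarrow> 'a) \<Rightarrow> 'a set \<Rightarrow> 'a \<Rightarrow> 'a set" where
  "rcoset_rl mul T x = (\<lambda>t. mul t x) ` T"

definition quotient_rl :: "'a set \<Rightarrow> ('a \<Rightarrow> 'a \<Rightarrow> 'a) \<Rightarrow> 'a \<Rightarrow> 'a set \<Rightarrow> 'a set monoid" where
  "quotient_rl S mul e T =
     \<lparr>carrier = rcoset_rl mul T ` S,
      monoid.mult = (\<lambda>A B. rcoset_rl mul T
                (mul (SOME x. x \<in> S \<and> A = rcoset_rl mul T x)
                    (SOME y. y \<in> S \<and> B = rcoset_rl mul T y))),
      one = rcoset_rl mul T e\<rparr>"

definition torsion_map :: "'a set \<Rightarrow> ('a \<Rightarrow> 'a \<Rightarrow> 'a) \<Rightarrow> 'a \<Rightarrow> 'a \<Rightarrow> 'a \<Rightarrow> 'a" where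
  "torsion_map S mul y z = (\<lambda>x \<in> S. THE u. u \<in> S \<and> mul u (mul y z) = mul (mul x y) z)"

definition group_torsion :: "'a set \<Rightarrow> ('a \<Rightarrow> 'a \<Rightarrow> 'a) \<Rightarrow> ('a \<Rightarrow> 'a) set" where
  "group_torsion S mul =
     generate (BijGroup S) {torsion_map S mul y z | y z. y \<in> S \<and> z \<in> S}"

definition elementary_abelian_2_group :: "('a, 'b) monoid_scheme \<Rightarrow> bool" where
  "elementary_abelian_2_group G \<longleftrightarrow>
     comm_group G \<and> (\<forall>g \<in> carrier G. g \<otimes>\<^bsub>G\<^esub> g = \<one>\<^bsub>G\<^esub>)"

end

theory Submission
  imports Defs
begin

text \<open>Every torsion map f(y,z) sends x to an element of the same class of the congruence
  R with R``{1} = T: since S/T is a group, (xy)z and x(yz) lie in the same coset of T, and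
  right cancellation modulo R gives f(y,z)(x) ~ x.  Hence G_S consists of permutations
  preserving every R-class.  As |T| = 2, every class has two elements, so such a
  permutation acts on each class either trivially or as the transposition of its two
  elements; permutations of this kind are involutions and commute.\<close>

definition class_preserving_perms :: "'a set \<Rightarrow> ('a \<times> 'a) set \<Rightarrow> ('a \<Rightarrow> 'a) set" where
  "class_preserving_perms S R = {f \<in> Bij S. \<forall>x\<in>S. (f x, x) \<in> R}"

lemma class_preserving_perm_eq_iff:
  "f \<in> class_preserving_perms S R \<Longrightarrow> x \<in> S \<Longrightarrow> y \<in> S \<Longrightarrow> f x = f y \<longleftrightarrow> x = y"
  by (auto simp: class_preserving_perms_def Bij_def bij_betw_def inj_on_def)

lemma subgroup_class_preserving_perms:
  assumes R: "equiv S R"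
  shows "subgroup (class_preserving_perms S R) (BijGroup S)"
proof (rule group.subgroupI[OF group_BijGroup])
  show "class_preserving_perms S R \<subseteq> carrier (BijGroup S)"
    by (auto simp: class_preserving_perms_def BijGroup_def)
  have "(\<lambda>x\<in>S. x) \<in> class_preserving_perms S R"
    using id_Bij R by (auto simp: class_preserving_perms_def equiv_def refl_on_def)
  then show "class_preserving_perms S R \<noteq> {}" by blast
next
  fix f assume f: "f \<in> class_preserving_perms S R"
  then have fB: "f \<in> Bij S" by (simp add: class_preserving_perms_def)
  have "(inv_into S f x, x) \<in> R" if x: "x \<in> S" for x
  proof -
    have "f (inv_into S f x) = x"
      using fB x by (auto simp: Bij_def intro: bij_betw_inv_into_right)
    moreover have "(f (inv_into S f x), inv_into S f x) \<in> R"
      using f Bij_inv_into_mem[OF fB x] by (simp add: class_preserving_perms_def)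
    ultimately show ?thesis using R by (metis equiv_def symD)
  qed
  then show "inv\<^bsub>BijGroup S\<^esub> f \<in> class_preserving_perms S R"
    using restrict_inv_into_Bij[OF fB]
    by (simp add: inv_BijGroup[OF fB] class_preserving_perms_def)
next
  fix f g assume f: "f \<in> class_preserving_perms S R" and g: "g \<in> class_preserving_perms S R"
  have "(f (g x), x) \<in> R" if x: "x \<in> S" for x
  proof -
    have gx: "(g x, x) \<in> R" using g x by (simp add: class_preserving_perms_def)
    then have "g x \<in> S" using R by (auto simp: equiv_def refl_on_def)
    then have "(f (g x), g x) \<in> R" using f by (simp add: class_preserving_perms_def)
    with gx show ?thesis using R by (metis equiv_def transD)
  qed
  moreover have "compose S f g \<in> Bij S"
    using f g by (simp add: class_preserving_perms_def compose_Bij)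
  ultimately show "f \<otimes>\<^bsub>BijGroup S\<^esub> g \<in> class_preserving_perms S R"
    using f g by (simp add: class_preserving_perms_def BijGroup_def compose_def)
qed

locale equiv_classes_le_two =
  fixes S :: "'a set" and R :: "('a \<times> 'a) set"
  assumes equiv: "equiv S R"
    and at_most_two: "\<lbrakk>(a, x) \<in> R; (b, x) \<in> R; a \<noteq> x; b \<noteq> x\<rbrakk> \<Longrightarrow> a = b"
begin

lemma class_preserving_perm_in_class:
  "f \<in> class_preserving_perms S R \<Longrightarrow> x \<in> S \<Longrightarrow> (f x, x) \<in> R \<and> f x \<in> S"
  using equiv by (auto simp: class_preserving_perms_def equiv_def refl_on_def)

lemma class_preserving_perm_involution:
  assumes f: "f \<in> class_preserving_perms S R" and x: "x \<in> S"
  shows "f (f x) = x"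
proof (rule ccontr)
  assume ffx: "f (f x) \<noteq> x"
  then have moved: "f x \<noteq> x" by auto
  have fx: "(f x, x) \<in> R" "f x \<in> S" using class_preserving_perm_in_class[OF f x] by auto
  have "(f (f x), x) \<in> R"
    using class_preserving_perm_in_class[OF f fx(2)] fx(1) equiv by (metis equiv_def transD)
  then have "f (f x) = f x" using at_most_two fx(1) ffx moved by blast
  then have "f x = x"
    using class_preserving_perm_eq_iff[OF f fx(2) x] by simp
  with moved show False ..
qed

lemma class_preserving_perm_fixes_partner:
  assumes f: "f \<in> class_preserving_perms S R" and x: "x \<in> S" and fixed: "f x = x"
    and y: "(y, x) \<in> R" "y \<noteq> x"
  shows "f y = y"
proof -
  have yS: "y \<in> S" using y(1) equiv by (auto simp: equiv_def refl_on_def)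
  have "(f y, x) \<in> R"
    using class_preserving_perm_in_class[OF f yS] y(1) equiv by (metis equiv_def transD)
  moreover have "f y \<noteq> f x"
    using class_preserving_perm_eq_iff[OF f yS x] y(2) by simp
  ultimately show ?thesis using at_most_two y fixed by metis
qed

lemma class_preserving_perms_commute:
  assumes f: "f \<in> class_preserving_perms S R" and g: "g \<in> class_preserving_perms S R"
    and x: "x \<in> S"
  shows "f (g x) = g (f x)"
proof -
  have fx: "(f x, x) \<in> R" and gx: "(g x, x) \<in> R"
    using class_preserving_perm_in_class f g x by auto
  consider "f x = x" | "g x = x" | "f x \<noteq> x" "g x \<noteq> x" by blast
  then show ?thesis
  proof cases
    case 1
    then show ?thesis using class_preserving_perm_fixes_partner[OF f x _ gx] by metis
  next
    case 2
    then show ?thesis using class_preserving_perm_fixes_partner[OF g x _ fx] by metis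
  next
    case 3
    then have "f x = g x" using at_most_two fx gx by blast
    then show ?thesis using class_preserving_perm_involution f g x by metis
  qed
qed

lemma elementary_abelian_2_group_class_preserving:
  assumes H: "subgroup H (BijGroup S)" and H_cp: "H \<subseteq> class_preserving_perms S R"
  shows "elementary_abelian_2_group (BijGroup S\<lparr>carrier := H\<rparr>)"
proof -
  let ?G = "BijGroup S\<lparr>carrier := H\<rparr>"
  have mult: "f \<otimes>\<^bsub>BijGroup S\<^esub> g = (\<lambda>x\<in>S. f (g x))" if "f \<in> H" "g \<in> H" for f g
    using that H_cp by (auto simp: class_preserving_perms_def BijGroup_def compose_def)
  have "comm_group ?G"
  proof (rule group.group_comm_groupI[OF subgroup.subgroup_is_group[OF H group_BijGroup]])
    fix f g assume "f \<in> carrier ?G" "g \<in> carrier ?G"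
    then have fg: "f \<in> H" "g \<in> H" by simp_all
    have "(\<lambda>x\<in>S. f (g x)) = (\<lambda>x\<in>S. g (f x))"
      using fg H_cp class_preserving_perms_commute by (intro restrict_ext) blast
    then show "f \<otimes>\<^bsub>?G\<^esub> g = g \<otimes>\<^bsub>?G\<^esub> f" by (simp add: fg mult)
  qed
  moreover have "g \<otimes>\<^bsub>?G\<^esub> g = \<one>\<^bsub>?G\<^esub>" if g: "g \<in> H" for g
  proof -
    have "(\<lambda>x\<in>S. g (g x)) = (\<lambda>x\<in>S. x)"
      using g H_cp class_preserving_perm_involution by (intro restrict_ext) blast
    moreover have "\<one>\<^bsub>?G\<^esub> = (\<lambda>x\<in>S. x)" by (simp add: BijGroup_def)
    ultimately show ?thesis by (simp add: g mult)
  qed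
  ultimately show ?thesis by (simp add: elementary_abelian_2_group_def)
qed

end

locale right_loop_congruence =
  fixes S :: "'a set" and mul :: "'a \<Rightarrow> 'a \<Rightarrow> 'a" and e :: 'a and R :: "('a \<times> 'a) set"
  assumes right_loop: "right_loop S mul e" and congruence: "congruence_rl S mul R"
begin

abbreviation coset :: "'a \<Rightarrow> 'a set" where
  "coset \<equiv> rcoset_rl mul (R `` {e})"

abbreviation Q :: "'a set monoid" where
  "Q \<equiv> quotient_rl S mul e (R `` {e})"

lemma one_mem: "e \<in> S"
  and mul_closed: "a \<in> S \<Longrightarrow> b \<in> S \<Longrightarrow> mul a b \<in> S"
  and left_one: "a \<in> S \<Longrightarrow> mul e a = a"
  and right_division: "a \<in> S \<Longrightarrow> b \<in> S \<Longrightarrow> \<exists>!x. x \<in> S \<and> mul x a = b"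
  using right_loop by (simp_all add: right_loop_def)

lemma right_cancel: "\<lbrakk>x \<in> S; y \<in> S; a \<in> S; mul x a = mul y a\<rbrakk> \<Longrightarrow> x = y"
  using right_division[of a "mul y a"] mul_closed by blast

lemma equiv: "equiv S R"
  using congruence by (simp add: congruence_rl_def)

lemma related_mem: "(a, b) \<in> R \<Longrightarrow> a \<in> S \<and> b \<in> S"
  and related_refl: "a \<in> S \<Longrightarrow> (a, a) \<in> R"
  and related_sym: "(a, b) \<in> R \<Longrightarrow> (b, a) \<in> R"
  and related_trans: "(a, b) \<in> R \<Longrightarrow> (b, c) \<in> R \<Longrightarrow> (a, c) \<in> R"
  using equiv by (auto simp: equiv_def refl_on_def dest: symD transD)

lemma pair_right_loop: "\<exists>e'. right_loop R (pair_op mul) e'"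
  using congruence by (simp add: congruence_rl_def right_subloop_def)

lemma related_mul: "(a, a') \<in> R \<Longrightarrow> (b, b') \<in> R \<Longrightarrow> (mul a b, mul a' b') \<in> R"
  using pair_right_loop by (auto simp: right_loop_def pair_op_def) (metis fst_conv snd_conv)

text \<open>Right division inside the right loop R of pairs, applied to the diagonal pair (a, a).\<close>
lemma related_right_division:
  assumes "(b, b') \<in> R" "a \<in> S"
  obtains u u' where "(u, u') \<in> R" "mul u a = b" "mul u' a = b'"
proof -
  obtain p where "p \<in> R" "pair_op mul p (a, a) = (b, b')"
    using pair_right_loop assms related_refl unfolding right_loop_def by blast
  then show ?thesis using that by (cases p) (auto simp: pair_op_def)
qed

lemma related_right_cancel:
  assumes "x \<in> S" "y \<in> S" "a \<in> S" "(mul x a, mul y a) \<in> R"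
  shows "(x, y) \<in> R"
proof -
  obtain u u' where u: "(u, u') \<in> R" "mul u a = mul x a" "mul u' a = mul y a"
    using related_right_division assms(3,4) by blast
  then have "u = x" "u' = y" using right_cancel related_mem assms(1-3) by blast+
  with u(1) show ?thesis by simp
qed

lemma mem_coset_iff: "a \<in> S \<Longrightarrow> x \<in> coset a \<longleftrightarrow> (x, a) \<in> R"
proof
  assume a: "a \<in> S" and "x \<in> coset a"
  then obtain s where "(e, s) \<in> R" "x = mul s a" by (auto simp: rcoset_rl_def)
  then show "(x, a) \<in> R" using related_mul[of s e a a] related_sym related_refl a left_one by auto
next
  assume a: "a \<in> S" and "(x, a) \<in> R"
  then obtain u u' where u: "(u, u') \<in> R" "mul u a = x" "mul u' a = a"
    using related_right_division by blast
  then have "u' = e" using right_cancel[of u' e a] related_mem a one_mem left_one by auto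
  with u show "x \<in> coset a" using related_sym by (auto simp: rcoset_rl_def)
qed

lemma coset_eq_iff:
  assumes "a \<in> S" "b \<in> S"
  shows "coset a = coset b \<longleftrightarrow> (a, b) \<in> R"
proof -
  have "coset a = coset b \<longleftrightarrow> (\<forall>x. (x, a) \<in> R \<longleftrightarrow> (x, b) \<in> R)"
    using assms by (auto simp: mem_coset_iff)
  also have "\<dots> \<longleftrightarrow> (a, b) \<in> R"
    using assms related_refl related_sym related_trans by blast
  finally show ?thesis .
qed

lemma quotient_mult_coset:
  assumes "a \<in> S" "b \<in> S"
  shows "coset a \<otimes>\<^bsub>Q\<^esub> coset b = coset (mul a b)"
proof -
  define x where "x = (SOME x. x \<in> S \<and> coset a = coset x)"
  define y where "y = (SOME y. y \<in> S \<and> coset b = coset y)"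
  have x: "x \<in> S \<and> coset a = coset x" unfolding x_def by (rule someI[of _ a]) (simp add: assms)
  have y: "y \<in> S \<and> coset b = coset y" unfolding y_def by (rule someI[of _ b]) (simp add: assms)
  have "(mul x y, mul a b) \<in> R"
    using related_mul x y assms coset_eq_iff related_sym by meson
  then have "coset (mul x y) = coset (mul a b)" using coset_eq_iff mul_closed x y assms by blast
  then show ?thesis by (simp add: quotient_rl_def x_def y_def)
qed

lemma related_assoc:
  assumes Q: "monoid Q" and xyz: "x \<in> S" "y \<in> S" "z \<in> S"
  shows "(mul (mul x y) z, mul x (mul y z)) \<in> R"
proof -
  have carrier: "coset a \<in> carrier Q" if "a \<in> S" for a
    using that by (simp add: quotient_rl_def)
  have "coset (mul (mul x y) z) = coset (mul x (mul y z))"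
    using monoid.m_assoc[OF Q carrier carrier carrier] xyz
    by (simp add: quotient_mult_coset mul_closed)
  then show ?thesis using coset_eq_iff mul_closed xyz by simp
qed

lemma torsion_map_mem:
  assumes "y \<in> S" "z \<in> S" "x \<in> S"
  shows "torsion_map S mul y z x \<in> S"
    and "mul (torsion_map S mul y z x) (mul y z) = mul (mul x y) z"
proof -
  have "\<exists>!u. u \<in> S \<and> mul u (mul y z) = mul (mul x y) z"
    using right_division mul_closed assms by simp
  from theI'[OF this] assms
  show "torsion_map S mul y z x \<in> S" "mul (torsion_map S mul y z x) (mul y z) = mul (mul x y) z"
    by (simp_all add: torsion_map_def)
qed

lemma torsion_map_Bij:
  assumes yz: "y \<in> S" "z \<in> S"
  shows "torsion_map S mul y z \<in> Bij S"
proof -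
  let ?f = "torsion_map S mul y z"
  have inj: "inj_on ?f S"
  proof (rule inj_onI)
    fix a b assume ab: "a \<in> S" "b \<in> S" "?f a = ?f b"
    have "mul (mul a y) z = mul (?f a) (mul y z)" using torsion_map_mem(2)[OF yz ab(1)] by simp
    also have "\<dots> = mul (mul b y) z" using ab(3) torsion_map_mem(2)[OF yz ab(2)] by simp
    finally have "mul a y = mul b y" using right_cancel mul_closed yz ab(1,2) by blast
    then show "a = b" using right_cancel yz ab(1,2) by blast
  qed
  have "S \<subseteq> ?f ` S"
  proof
    fix w assume w: "w \<in> S"
    obtain u where u: "u \<in> S" "mul u z = mul w (mul y z)"
      using right_division[of z "mul w (mul y z)"] mul_closed w yz by blast
    obtain x where x: "x \<in> S" "mul x y = u"
      using right_division[of y u] u yz by blast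
    have "?f x = w"
      using right_cancel[OF torsion_map_mem(1)[OF yz x(1)] w mul_closed[OF yz]]
        torsion_map_mem(2)[OF yz x(1)] x(2) u(2) by simp
    with x show "w \<in> ?f ` S" by blast
  qed
  moreover have "?f ` S \<subseteq> S" using torsion_map_mem(1)[OF yz] by auto
  ultimately show ?thesis using inj by (auto simp: Bij_def bij_betw_def torsion_map_def)
qed

lemma torsion_map_related:
  assumes "monoid Q" "y \<in> S" "z \<in> S" "x \<in> S"
  shows "(torsion_map S mul y z x, x) \<in> R"
proof (rule related_right_cancel)
  show "(mul (torsion_map S mul y z x) (mul y z), mul x (mul y z)) \<in> R"
    using torsion_map_mem(2) related_assoc assms by simp
qed (use torsion_map_mem(1) mul_closed assms in auto)

lemma group_torsion_class_preserving:
  assumes "monoid Q"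
  shows "group_torsion S mul \<subseteq> class_preserving_perms S R"
proof -
  have "{torsion_map S mul y z | y z. y \<in> S \<and> z \<in> S} \<subseteq> class_preserving_perms S R"
    using torsion_map_Bij torsion_map_related[OF assms] by (auto simp: class_preserving_perms_def)
  then show ?thesis
    unfolding group_torsion_def
    by (rule group.generate_subgroup_incl[OF group_BijGroup _ subgroup_class_preserving_perms[OF equiv]])
qed

lemma subgroup_group_torsion: "subgroup (group_torsion S mul) (BijGroup S)"
  unfolding group_torsion_def
  by (rule group.generate_is_subgroup[OF group_BijGroup]) (auto simp: BijGroup_def torsion_map_Bij)

text \<open>The class of x is the coset T x = {x, t x}.\<close>
lemma equiv_classes_le_two_if_card_2:
  assumes "card (R `` {e}) = 2"
  shows "equiv_classes_le_two S R"
proof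
  fix a b x assume a: "(a, x) \<in> R" and b: "(b, x) \<in> R" and "a \<noteq> x" "b \<noteq> x"
  obtain p q where "R `` {e} = {p, q}"
    using assms by (auto simp: card_2_iff)
  moreover have "e \<in> R `` {e}" using related_refl[OF one_mem] by simp
  ultimately obtain t where t: "R `` {e} = {e, t}"
    by (metis insert_commute insertE singletonD)
  have "x \<in> S" using related_mem a by blast
  then have "a \<in> {x, mul t x}" "b \<in> {x, mul t x}"
    using a b mem_coset_iff t left_one by (auto simp: rcoset_rl_def)
  with \<open>a \<noteq> x\<close> \<open>b \<noteq> x\<close> show "a = b" by auto
qed (rule equiv)

end

theorem mainTheorem4:
  fixes S :: "'a set" and mul :: "'a \<Rightarrow> 'a \<Rightarrow> 'a" and e :: 'a and T :: "'a set"
  assumes "right_loop S mul e"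
    and "invariant_subloop S mul e T"
    and "card T = 2"
    and "group (quotient_rl S mul e T)"
  shows "elementary_abelian_2_group
           ((BijGroup S)\<lparr>carrier := group_torsion S mul\<rparr>)"
proof -
  obtain R where R: "congruence_rl S mul R" and T: "T = R `` {e}"
    using assms(2) by (auto simp: invariant_subloop_def)
  interpret right_loop_congruence S mul e R
    using assms(1) R by unfold_locales
  interpret equiv_classes_le_two S R
    using equiv_classes_le_two_if_card_2 assms(3) T by simp
  have "monoid Q" using assms(4) T by (simp add: group.is_monoid)
  then show ?thesis
    using elementary_abelian_2_group_class_preserving subgroup_group_torsion
      group_torsion_class_preserving by blast
qed

end
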